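(* Let $V$ be a ground model, $\kappa$ an infinite cardinal, and $\mathbb{A}\in V$ an infinite Boolean algebra. Then for every $\varepsilon>0$ there are $\mathbb{M}_\kappa$-names $\dot{\mathcal{U}}$ and $\dot{\mathcal{V}}$ for ultrafilters on $\mathbb{A}$ such that $\Vdash_{\mathbb{M}_\kappa}\dot{\mathcal{U}}\neq\dot{\mathcal{V}}$, and for every $p\in\mathbb{M}_\kappa$ for which there is $A\in\mathbb{A}$ with $p\Vdash A\in\dot{\mathcal{U}}\setminus\dot{\mathcal{V}}$ we have $\lambda_\kappa(p)\le 1/4+\varepsilon$.
   Context: $\mathbb{M}_\kappa=Bor(2^\kappa)/\mathcal{N}_\kappa$ is the measure algebra of the standard product measure $\lambda_\kappa$ on $2^\kappa$ ($\lambda_\kappa$ also denotes the induced measure on $\mathbb{M}_\kappa$), used as a forcing notion (conditions are nonzero elements). An $\mathbb{M}_\kappa$-name for an ultrafilter on $\mathbb{A}$ is a name $\dot{\mathcal{U}}$ with $\Vdash_{\mathbb{M}_\kappa}$ "$\dot{\mathcal{U}}$ is an ultrafilter on $\mathbb{A}$". *)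

theory Defs
  imports "HOL-Probability.Probability"
begin

text \<open>The standard product (coin-flipping) measure lambda_kappa on 2^kappa, where kappa is
  represented by an infinite index type 'k.  Elements of the measure algebra M_kappa are
  represented by measurable sets, compared modulo null sets.\<close>

definition cantor_measure :: "('k \<Rightarrow> bool) measure" where
  "cantor_measure = (\<Pi>\<^sub>M i\<in>UNIV. measure_pmf (bernoulli_pmf (1/2)))"

definition ma_eq :: "'b measure \<Rightarrow> 'b set \<Rightarrow> 'b set \<Rightarrow> bool" where
  "ma_eq M A B \<longleftrightarrow> A \<in> sets M \<and> B \<in> sets M \<and> measure M ((A - B) \<union> (B - A)) = 0"

text \<open>A name for a subset U of the ground-model Boolean algebra 'a is (up to equivalence)
  given by the Boolean values  f a = [[a \<in> U]].  "It is forced that U is an ultrafilter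
  on A" holds iff f is a Boolean homomorphism from 'a into the measure algebra.\<close>
definition ultrafilter_name :: "'b measure \<Rightarrow> ('a::boolean_algebra \<Rightarrow> 'b set) \<Rightarrow> bool" where
  "ultrafilter_name M f \<longleftrightarrow>
     (\<forall>a. f a \<in> sets M) \<and>
     (\<forall>a b. ma_eq M (f (inf a b)) (f a \<inter> f b)) \<and>
     (\<forall>a. ma_eq M (f (- a)) (space M - f a)) \<and>
     ma_eq M (f top) (space M)"

text \<open>Forced "U \<noteq> V": the supremum over a of [[a \<in> U]] symdiff [[a \<in> V]] is 1 in
  the measure algebra, i.e. every set almost disjoint from all of these values is null.\<close>
definition forces_neq :: "'b measure \<Rightarrow> ('a \<Rightarrow> 'b set) \<Rightarrow> ('a \<Rightarrow> 'b set) \<Rightarrow> bool" where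
  "forces_neq M f g \<longleftrightarrow>
     (\<forall>B\<in>sets M. (\<forall>a. measure M (B \<inter> ((f a - g a) \<union> (g a - f a))) = 0) \<longrightarrow> measure M B = 0)"

text \<open>p forces "a \<in> U \<setminus> V": p \<le> [[a\<in>U]] \<and> \<not>[[a\<in>V]] in the measure algebra.\<close>
definition forces_in_diff :: "'b measure \<Rightarrow> 'b set \<Rightarrow> ('a \<Rightarrow> 'b set) \<Rightarrow> ('a \<Rightarrow> 'b set) \<Rightarrow> 'a \<Rightarrow> bool" where
  "forces_in_diff M p f g a \<longleftrightarrow> measure M (p - (f a - g a)) = 0"

end

theory Submission
  imports Defs
begin

text \<open>
  Fix 2^j distinct ultrafilters of the algebra, indexed by the binary words of length j, and
  read two independent uniformly distributed words s and t off two disjoint blocks of coordinates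
  of 2^kappa. Let U be the ultrafilter indexed by s and V the one indexed by t, where t is first
  altered in one bit on the event s = t; then U and V differ everywhere. For an element A, let S
  be the set of words whose ultrafilter contains A. The event "A in U but not in V" is contained
  in "s in S and t not in S" together with "s = t", which have measures |S|(2^j - |S|)/4^j <= 1/4
  and 2^-j. So every condition forcing A into U but not V has measure at most 1/4 + 2^-j.
  Infinitely many ultrafilters exist because finitely many cannot separate the (infinitely many)
  elements of the algebra.
\<close>

definition boolean_hom :: "('a::boolean_algebra \<Rightarrow> bool) \<Rightarrow> bool" where
  "boolean_hom h \<longleftrightarrow> (\<forall>a b. h (inf a b) = (h a \<and> h b)) \<and> (\<forall>a. h (- a) = (\<not> h a)) \<and> h top"

lemma boolean_hom_inf [simp]: "boolean_hom h \<Longrightarrow> h (inf a b) = (h a \<and> h b)"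
  and boolean_hom_compl [simp]: "boolean_hom h \<Longrightarrow> h (- a) = (\<not> h a)"
  and boolean_hom_top [simp]: "boolean_hom h \<Longrightarrow> h top"
  by (simp_all add: boolean_hom_def)

lemma boolean_hom_sup [simp]: "boolean_hom h \<Longrightarrow> h (sup a b) = (h a \<or> h b)"
proof -
  assume "boolean_hom h"
  moreover have "sup a b = - inf (- a) (- b)"
    by simp
  ultimately show ?thesis
    by (simp del: compl_inf)
qed

lemma boolean_hom_diff [simp]: "boolean_hom h \<Longrightarrow> h (a - b) = (h a \<and> \<not> h b)"
  by (simp add: diff_eq)

definition proper_filter :: "'a::boolean_algebra set \<Rightarrow> bool" where
  "proper_filter F \<longleftrightarrow> top \<in> F \<and> bot \<notin> F \<and> (\<forall>x\<in>F. \<forall>y\<in>F. inf x y \<in> F) \<and> (\<forall>x\<in>F. \<forall>y. x \<le> y \<longrightarrow> y \<in> F)"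

lemma proper_filterI:
  "top \<in> F \<Longrightarrow> bot \<notin> F \<Longrightarrow> (\<And>x y. x \<in> F \<Longrightarrow> y \<in> F \<Longrightarrow> inf x y \<in> F) \<Longrightarrow>
    (\<And>x y. x \<in> F \<Longrightarrow> x \<le> y \<Longrightarrow> y \<in> F) \<Longrightarrow> proper_filter F"
  by (simp add: proper_filter_def)

lemma proper_filterD:
  assumes "proper_filter F"
  shows proper_filter_top: "top \<in> F"
    and proper_filter_bot: "bot \<notin> F"
    and proper_filter_inf: "x \<in> F \<Longrightarrow> y \<in> F \<Longrightarrow> inf x y \<in> F"
    and proper_filter_upward: "x \<in> F \<Longrightarrow> x \<le> y \<Longrightarrow> y \<in> F"
  using assms unfolding proper_filter_def by blast+

lemma proper_filter_principal: "a \<noteq> bot \<Longrightarrow> proper_filter {y. a \<le> y}"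
  by (rule proper_filterI) (auto simp: bot_unique intro: order_trans)

lemma proper_filter_Union_chain:
  assumes "C \<noteq> {}" "\<And>F. F \<in> C \<Longrightarrow> proper_filter F" "\<forall>F\<in>C. \<forall>G\<in>C. F \<subseteq> G \<or> G \<subseteq> F"
  shows "proper_filter (\<Union>C)"
proof (rule proper_filterI)
  show "top \<in> \<Union>C" "bot \<notin> \<Union>C"
    using assms(1,2) proper_filter_top proper_filter_bot by blast+
next
  fix x y assume "x \<in> \<Union>C" "y \<in> \<Union>C"
  then obtain F where "F \<in> C" "x \<in> F" "y \<in> F"
    using assms(3) by blast
  then show "inf x y \<in> \<Union>C"
    using assms(2) proper_filter_inf by blast
next
  fix x y assume "x \<in> \<Union>C" "x \<le> y"
  then obtain F where "F \<in> C" "x \<in> F"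
    by blast
  then show "y \<in> \<Union>C"
    using assms(2) proper_filter_upward \<open>x \<le> y\<close> by blast
qed

lemma proper_filter_insert:
  assumes "proper_filter F" "- x \<notin> F"
  shows "proper_filter {y. \<exists>f\<in>F. inf f x \<le> y}"
proof (rule proper_filterI)
  show "top \<in> {y. \<exists>f\<in>F. inf f x \<le> y}"
    using proper_filter_top[OF assms(1)] by auto
  show "bot \<notin> {y. \<exists>f\<in>F. inf f x \<le> y}"
    using assms proper_filter_upward[OF assms(1)] by (auto simp: bot_unique inf_shunt)
next
  fix u v assume "u \<in> {y. \<exists>f\<in>F. inf f x \<le> y}" "v \<in> {y. \<exists>f\<in>F. inf f x \<le> y}"
  then obtain f g where "f \<in> F" "inf f x \<le> u" "g \<in> F" "inf g x \<le> v"
    by blast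
  moreover have "inf (inf f g) x \<le> inf u v"
    using inf_mono[OF \<open>inf f x \<le> u\<close> \<open>inf g x \<le> v\<close>] by (simp add: inf_aci)
  ultimately show "inf u v \<in> {y. \<exists>f\<in>F. inf f x \<le> y}"
    using proper_filter_inf[OF assms(1)] by blast
next
  fix u v assume "u \<in> {y. \<exists>f\<in>F. inf f x \<le> y}" "u \<le> v"
  then show "v \<in> {y. \<exists>f\<in>F. inf f x \<le> y}"
    using order_trans by blast
qed

lemma boolean_hom_maximal_filter:
  assumes F: "proper_filter F" and max: "\<And>G. proper_filter G \<Longrightarrow> F \<subseteq> G \<Longrightarrow> G = F"
  shows "boolean_hom (\<lambda>x. x \<in> F)"
proof -
  have ultra: "x \<in> F \<or> - x \<in> F" for x
  proof (rule disjCI)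
    let ?G = "{y. \<exists>f\<in>F. inf f x \<le> y}"
    assume "- x \<notin> F"
    moreover have "F \<subseteq> ?G"
      by (blast intro: inf_le1)
    ultimately have "?G = F"
      using max proper_filter_insert[OF F] by blast
    moreover have "x \<in> ?G"
      using proper_filter_top[OF F] by (blast intro: inf_le2)
    ultimately show "x \<in> F"
      by simp
  qed
  have not_both: "\<not> (x \<in> F \<and> - x \<in> F)" for x
    using proper_filter_inf[OF F, of x "- x"] proper_filter_bot[OF F] by auto
  show ?thesis
    unfolding boolean_hom_def
  proof (intro conjI allI)
    fix x y show "(inf x y \<in> F) = (x \<in> F \<and> y \<in> F)"
      using proper_filter_inf[OF F] proper_filter_upward[OF F] by (meson inf_le1 inf_le2)
  next
    fix x show "(- x \<in> F) = (x \<notin> F)"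
      using ultra not_both by blast
  qed (rule proper_filter_top[OF F])
qed

lemma exists_boolean_hom:
  fixes a :: "'a::boolean_algebra"
  assumes "a \<noteq> bot"
  shows "\<exists>h. boolean_hom h \<and> h a"
proof -
  let ?Fs = "{F. proper_filter F \<and> a \<in> F}"
  have "\<exists>F\<in>?Fs. \<forall>G\<in>?Fs. F \<subseteq> G \<longrightarrow> G = F"
  proof (rule Zorn_Lemma2, intro ballI)
    fix C assume C: "C \<in> chains ?Fs"
    show "\<exists>F\<in>?Fs. \<forall>G\<in>C. G \<subseteq> F"
    proof (cases "C = {}")
      case True
      then show ?thesis
        using proper_filter_principal[OF assms] by blast
    next
      case False
      then have "\<Union>C \<in> ?Fs"
        using C proper_filter_Union_chain[of C] by (auto simp: chains_def chain_subset_def)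
      then show ?thesis
        by blast
    qed
  qed
  then obtain F where "proper_filter F" "a \<in> F" "\<And>G. proper_filter G \<Longrightarrow> F \<subseteq> G \<Longrightarrow> G = F"
    by blast
  then show ?thesis
    using boolean_hom_maximal_filter by blast
qed

lemma infinite_boolean_homs:
  assumes "infinite (UNIV :: 'a::boolean_algebra set)"
  shows "infinite {h :: 'a \<Rightarrow> bool. boolean_hom h}"
proof
  let ?Hs = "{h :: 'a \<Rightarrow> bool. boolean_hom h}"
  let ?values = "\<lambda>a. \<lambda>h\<in>?Hs. h a"
  assume "finite ?Hs"
  then have "finite (?Hs \<rightarrow>\<^sub>E (UNIV :: bool set))"
    by (simp add: finite_PiE)
  moreover have "range ?values \<subseteq> ?Hs \<rightarrow>\<^sub>E UNIV"
    by auto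
  ultimately have "finite (range ?values)"
    by (rule finite_subset[rotated])
  then have "\<not> inj ?values"
    using assms finite_imageD by blast
  \<comment> \<open>Two distinct elements lying in the same ultrafilters: their symmetric difference lies in none.\<close>
  then obtain a b where "a \<noteq> b" and values_eq: "?values a = ?values b"
    unfolding inj_def by blast
  have same: "h a = h b" if "boolean_hom h" for h
    using that fun_cong[OF values_eq, of h] by simp
  have "sup (a - b) (b - a) \<noteq> bot"
  proof
    assume "sup (a - b) (b - a) = bot"
    then have "a \<le> b" "b \<le> a"
      by (simp_all add: diff_eq inf_shunt)
    with \<open>a \<noteq> b\<close> show False
      by simp
  qed
  then obtain h where "boolean_hom h" "h (sup (a - b) (b - a))"
    using exists_boolean_hom by blast
  then show False
    using same[of h] by simp
qed

lemma prob_space_cantor_measure: "prob_space cantor_measure"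
  unfolding cantor_measure_def by (rule prob_space_PiM) (simp add: prob_space_measure_pmf)

interpretation cantor: prob_space cantor_measure
  by (rule prob_space_cantor_measure)

lemma space_cantor_measure [simp]: "space cantor_measure = UNIV"
  unfolding cantor_measure_def by (simp add: space_PiM)

lemma cantor_cylinder:
  fixes c :: "'i \<Rightarrow> 'k"
  assumes "inj_on c I" "finite I"
  shows "{x. \<forall>i\<in>I. x (c i) = z i} \<in> sets cantor_measure"
    and "measure cantor_measure {x. \<forall>i\<in>I. x (c i) = z i} = (1/2) ^ card I"
proof -
  let ?B = "measure_pmf (bernoulli_pmf (1/2))"
  let ?z = "\<lambda>k. z (the_inv_into I c k)"
  have cyl: "{x. \<forall>i\<in>I. x (c i) = z i} = prod_emb UNIV (\<lambda>_. ?B) (c ` I) (\<Pi>\<^sub>E k\<in>c ` I. {?z k})"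
    using assms(1) by (auto simp: prod_emb_def space_PiM PiE_iff the_inv_into_f_f)
  show "{x. \<forall>i\<in>I. x (c i) = z i} \<in> sets cantor_measure"
    unfolding cyl cantor_measure_def using assms(2) by (intro sets_PiM_I) auto
  have "emeasure cantor_measure {x. \<forall>i\<in>I. x (c i) = z i} = (\<Prod>k\<in>c ` I. emeasure ?B {?z k})"
    unfolding cyl cantor_measure_def using assms(2)
    by (intro emeasure_PiM_emb) (auto simp: prob_space_measure_pmf)
  also have "\<dots> = (\<Prod>k\<in>c ` I. ennreal (1/2))"
    by (intro prod.cong refl) (simp add: emeasure_pmf_single split: if_splits)
  also have "\<dots> = ennreal ((1/2) ^ card I)"
    by (simp only: prod_constant card_image[OF assms(1)] ennreal_power[symmetric])
  finally show "measure cantor_measure {x. \<forall>i\<in>I. x (c i) = z i} = (1/2) ^ card I"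
    by (simp add: measure_def)
qed

abbreviation words :: "nat \<Rightarrow> (nat \<Rightarrow> bool) set" where
  "words j \<equiv> {..<j} \<rightarrow>\<^sub>E UNIV"

definition block :: "(nat \<times> bool \<Rightarrow> 'k) \<Rightarrow> nat \<Rightarrow> bool \<Rightarrow> ('k \<Rightarrow> bool) \<Rightarrow> nat \<Rightarrow> bool" where
  "block c j b x = (\<lambda>i\<in>{..<j}. x (c (i, b)))"

lemma block_in_words [simp]: "block c j b x \<in> words j"
  by (simp add: block_def)

lemma finite_words [simp]: "finite (words j)"
  by (simp add: finite_PiE)

lemma card_words: "card (words j) = 2 ^ j"
  by (simp add: card_PiE)

lemma blocks_eq_iff_cylinder:
  assumes "v \<in> words j" "w \<in> words j"
  shows "(block c j False x, block c j True x) = (v, w) \<longleftrightarrow>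
    (\<forall>q\<in>{..<j} \<times> UNIV. x (c q) = (if snd q then w else v) (fst q))"
  using assms by (auto simp: block_def PiE_iff extensional_def fun_eq_iff)

lemma measure_blocks:
  assumes "inj c"
  shows "{x. Q (block c j False x) (block c j True x)} \<in> sets cantor_measure"
    and "measure cantor_measure {x. Q (block c j False x) (block c j True x)} =
      card {(v, w) \<in> words j \<times> words j. Q v w} / 4 ^ j"
proof -
  let ?blocks = "\<lambda>x. (block c j False x, block c j True x)"
  define R where "R = {(v, w) \<in> words j \<times> words j. Q v w}"
  define E where "E p = ?blocks -` {p}" for p
  have finite_R: "finite R"
    unfolding R_def by (rule finite_subset[of _ "words j \<times> words j"]) auto
  have "{x. Q (block c j False x) (block c j True x)} = ?blocks -` R"
    by (auto simp: R_def)
  then have union: "{x. Q (block c j False x) (block c j True x)} = (\<Union>p\<in>R. E p)"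
    unfolding E_def by (simp flip: vimage_eq_UN)
  have E_cylinder: "E p = {x. \<forall>q\<in>{..<j} \<times> UNIV. x (c q) = (if snd q then snd p else fst p) (fst q)}"
    if p: "p \<in> R" for p
  proof -
    obtain v w where "p = (v, w)" "v \<in> words j" "w \<in> words j"
      using p unfolding R_def by blast
    then show ?thesis
      unfolding E_def vimage_def using blocks_eq_iff_cylinder[of v j w c] by simp
  qed
  have inj_c: "inj_on c ({..<j} \<times> UNIV)"
    using assms by (rule inj_on_subset) simp
  have finite_I: "finite ({..<j} \<times> (UNIV :: bool set))"
    by simp
  have card_I: "card ({..<j} \<times> (UNIV :: bool set)) = 2 * j"
    by (simp add: card_cartesian_product)
  have E_sets: "E ` R \<subseteq> sets cantor_measure"
  proof (intro image_subsetI)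
    fix p assume "p \<in> R"
    show "E p \<in> sets cantor_measure"
      unfolding E_cylinder[OF \<open>p \<in> R\<close>] by (rule cantor_cylinder(1)[OF inj_c finite_I])
  qed
  then show "{x. Q (block c j False x) (block c j True x)} \<in> sets cantor_measure"
    unfolding union using finite_R by auto
  have "measure cantor_measure (\<Union>p\<in>R. E p) = (\<Sum>p\<in>R. measure cantor_measure (E p))"
    using finite_R E_sets by (intro cantor.finite_measure_finite_Union) (auto simp: disjoint_family_on_def E_def)
  also have "\<dots> = (\<Sum>p\<in>R. (1/2) ^ (2 * j))"
    by (intro sum.cong refl) (simp only: E_cylinder cantor_cylinder(2)[OF inj_c finite_I] card_I)
  also have "\<dots> = card R / 4 ^ j"
    by (simp add: power_mult power_one_over)
  finally show "measure cantor_measure {x. Q (block c j False x) (block c j True x)} =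
      card {(v, w) \<in> words j \<times> words j. Q v w} / 4 ^ j"
    unfolding union R_def .
qed

definition other_block :: "(nat \<times> bool \<Rightarrow> 'k) \<Rightarrow> nat \<Rightarrow> ('k \<Rightarrow> bool) \<Rightarrow> nat \<Rightarrow> bool" where
  "other_block c j x =
     (let v = block c j False x; w = block c j True x in if w = v then v(0 := \<not> v 0) else w)"

lemma other_block_in_words: "0 < j \<Longrightarrow> other_block c j x \<in> words j"
  using block_in_words[of c j False x] block_in_words[of c j True x]
  by (auto simp: other_block_def Let_def PiE_iff extensional_def)

lemma other_block_neq_block: "other_block c j x \<noteq> block c j False x"
  by (auto simp: other_block_def Let_def dest: fun_cong[of _ _ 0])

lemma sets_other_block:
  assumes "inj c"
  shows "{x. Q (block c j False x) (other_block c j x)} \<in> sets cantor_measure"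
  using measure_blocks(1)[OF assms, where Q = "\<lambda>v w. Q v (if w = v then v(0 := \<not> v 0) else w)"]
  by (simp add: other_block_def Let_def)

lemma mult_le_quarter_square_sum: "(a::real) * b \<le> (a + b)\<^sup>2 / 4"
  using zero_le_power2[of "a - b"] by (simp add: power2_eq_square algebra_simps)

lemma measure_blocks_cross_le:
  assumes "inj c"
  shows "measure cantor_measure {x. P (block c j False x) \<and> \<not> P (block c j True x)} \<le> 1/4"
proof -
  define k where "k = real (card (words j \<inter> Collect P))"
  define l where "l = real (card (words j - Collect P))"
  have kl: "k + l = 2 ^ j"
    unfolding k_def l_def using card_Int_Diff[of "words j" "Collect P"]
    by (simp add: card_words flip: of_nat_add)
  have "{(v, w) \<in> words j \<times> words j. P v \<and> \<not> P w} = (words j \<inter> Collect P) \<times> (words j - Collect P)"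
    by auto
  then have "measure cantor_measure {x. P (block c j False x) \<and> \<not> P (block c j True x)} = k * l / 4 ^ j"
    using measure_blocks(2)[OF assms, of "\<lambda>v w. P v \<and> \<not> P w"]
    by (simp add: k_def l_def card_cartesian_product)
  also have "\<dots> \<le> (k + l)\<^sup>2 / 4 / 4 ^ j"
    by (intro divide_right_mono mult_le_quarter_square_sum) simp
  also have "\<dots> = 1/4"
    unfolding kl by (simp add: power2_eq_square flip: power_mult_distrib)
  finally show ?thesis .
qed

lemma measure_blocks_eq:
  assumes "inj c"
  shows "measure cantor_measure {x. block c j False x = block c j True x} = 1 / 2 ^ j"
proof -
  have "{(v, w) \<in> words j \<times> words j. v = w} = (\<lambda>v. (v, v)) ` words j"
    by auto
  then have "measure cantor_measure {x. block c j False x = block c j True x} = 2 ^ j / 4 ^ j"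
    using measure_blocks(2)[OF assms, of "\<lambda>v w. v = w"]
    by (simp add: card_image inj_on_def card_words)
  also have "\<dots> = 1 / 2 ^ j"
    by (simp add: power_one_over flip: power_divide)
  finally show ?thesis .
qed

lemma measure_block_not_other_block_le:
  assumes "inj c"
  shows "measure cantor_measure {x. P (block c j False x) \<and> \<not> P (other_block c j x)} \<le> 1/4 + 1/2^j"
proof -
  let ?cross = "{x. P (block c j False x) \<and> \<not> P (block c j True x)}"
  let ?diagonal = "{x. block c j False x = block c j True x}"
  have "{x. P (block c j False x) \<and> \<not> P (other_block c j x)} \<subseteq> ?cross \<union> ?diagonal"
    by (auto simp: other_block_def Let_def)
  then have "measure cantor_measure {x. P (block c j False x) \<and> \<not> P (other_block c j x)}
      \<le> measure cantor_measure (?cross \<union> ?diagonal)"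
    using measure_blocks(1)[OF assms] by (intro cantor.finite_measure_mono) auto
  also have "\<dots> \<le> measure cantor_measure ?cross + measure cantor_measure ?diagonal"
    using measure_blocks(1)[OF assms] by (intro measure_Un_le)
  finally show ?thesis
    using measure_blocks_cross_le[OF assms, of P j] measure_blocks_eq[OF assms, of j] by simp
qed

lemma ultrafilter_name_preimage:
  assumes "\<And>x. x \<in> space M \<Longrightarrow> boolean_hom (G x)" "\<And>a. {x \<in> space M. G x a} \<in> sets M"
  shows "ultrafilter_name M (\<lambda>a. {x \<in> space M. G x a})"
proof -
  have "{x \<in> space M. G x (inf a b)} = {x \<in> space M. G x a} \<inter> {x \<in> space M. G x b}"
    and "{x \<in> space M. G x (- a)} = space M - {x \<in> space M. G x a}"
    and "{x \<in> space M. G x top} = space M" for a b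
    using assms(1) by auto
  then show ?thesis
    using assms(2) by (simp add: ultrafilter_name_def ma_eq_def)
qed

lemma finite_separating_set:
  assumes "finite F"
  obtains A where "finite A" "\<And>f g. f \<in> F \<Longrightarrow> g \<in> F \<Longrightarrow> f \<noteq> g \<Longrightarrow> \<exists>a\<in>A. f a \<noteq> g a"
proof
  let ?A = "(\<lambda>(f, g). SOME a. f a \<noteq> g a) ` (F \<times> F)"
  show "finite ?A"
    using assms by simp
  fix f g assume "f \<in> F" "g \<in> F" "f \<noteq> g"
  then obtain a where "f a \<noteq> g a"
    by auto
  then have "f (SOME a. f a \<noteq> g a) \<noteq> g (SOME a. f a \<noteq> g a)"
    by (rule someI)
  moreover have "(SOME a. f a \<noteq> g a) \<in> ?A"
    using \<open>f \<in> F\<close> \<open>g \<in> F\<close> by (auto intro!: image_eqI[where x = "(f, g)"])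
  ultimately show "\<exists>a\<in>?A. f a \<noteq> g a"
    by blast
qed

lemma inj_on_into_infinite:
  assumes "finite A" "infinite S"
  obtains f where "inj_on f A" "f ` A \<subseteq> S"
proof -
  obtain B where "B \<subseteq> S" "finite B" "card B = card A"
    using infinite_arbitrarily_large[OF assms(2)] by blast
  then show thesis
    using card_le_inj[OF assms(1), of B] that by auto
qed

lemma (in finite_measure) forces_neqI:
  assumes "finite A" "\<And>a. f a \<in> sets M" "\<And>a. g a \<in> sets M"
    and "space M \<subseteq> (\<Union>a\<in>A. (f a - g a) \<union> (g a - f a))"
  shows "forces_neq M f g"
  unfolding forces_neq_def
proof (intro ballI impI)
  fix B assume B: "B \<in> sets M" "\<forall>a. measure M (B \<inter> ((f a - g a) \<union> (g a - f a))) = 0"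
  have "B \<subseteq> (\<Union>a\<in>A. B \<inter> ((f a - g a) \<union> (g a - f a)))"
    using sets.sets_into_space[OF B(1)] assms(4) by blast
  then have "measure M B \<le> measure M (\<Union>a\<in>A. B \<inter> ((f a - g a) \<union> (g a - f a)))"
    using assms B(1) by (intro finite_measure_mono sets.finite_UN sets.Int) auto
  also have "\<dots> \<le> (\<Sum>a\<in>A. measure M (B \<inter> ((f a - g a) \<union> (g a - f a))))"
    using assms B(1) by (intro finite_measure_subadditive_finite) auto
  also have "\<dots> = 0"
    using B(2) by simp
  finally show "measure M B = 0"
    by (simp add: measure_le_0_iff)
qed

lemma (in finite_measure) measure_le_if_forces_in_diff:
  assumes "forces_in_diff M p f g a" "p \<in> sets M" "f a \<in> sets M" "g a \<in> sets M"
  shows "measure M p \<le> measure M (f a - g a)"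
proof -
  have "measure M p \<le> measure M ((p - (f a - g a)) \<union> (f a - g a))"
    using assms(2-4) by (intro finite_measure_mono) auto
  also have "\<dots> \<le> measure M (p - (f a - g a)) + measure M (f a - g a)"
    using assms(2-4) by (intro measure_Un_le) auto
  finally show ?thesis
    using assms(1) by (simp add: forces_in_diff_def)
qed

lemma block_ultrafilter_names:
  fixes c :: "nat \<times> bool \<Rightarrow> 'k" and H :: "(nat \<Rightarrow> bool) \<Rightarrow> 'a::boolean_algebra \<Rightarrow> bool"
  assumes c: "inj c" and j: "0 < j"
    and H: "inj_on H (words j)" "H ` words j \<subseteq> {h. boolean_hom h}"
  defines "U \<equiv> \<lambda>a. {x. H (block c j False x) a}" and "V \<equiv> \<lambda>a. {x. H (other_block c j x) a}"
  shows "ultrafilter_name cantor_measure U" and "ultrafilter_name cantor_measure V"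
    and "forces_neq cantor_measure U V"
    and "p \<in> sets cantor_measure \<Longrightarrow> forces_in_diff cantor_measure p U V a \<Longrightarrow>
      measure cantor_measure p \<le> 1/4 + 1/2^j"
proof -
  have U_sets: "U a \<in> sets cantor_measure" and V_sets: "V a \<in> sets cantor_measure" for a
    unfolding U_def V_def using measure_blocks(1)[OF c] sets_other_block[OF c] by auto
  have "boolean_hom (H (block c j False x))" "boolean_hom (H (other_block c j x))" for x
    using H(2) block_in_words[of c j False x] other_block_in_words[OF j, of c x] by blast+
  then show "ultrafilter_name cantor_measure U" "ultrafilter_name cantor_measure V"
    using ultrafilter_name_preimage[of cantor_measure "\<lambda>x. H (block c j False x)"]
      ultrafilter_name_preimage[of cantor_measure "\<lambda>x. H (other_block c j x)"] U_sets V_sets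
    by (simp_all add: U_def V_def)
  obtain A where "finite A"
    and A: "\<And>h h'. h \<in> H ` words j \<Longrightarrow> h' \<in> H ` words j \<Longrightarrow> h \<noteq> h' \<Longrightarrow> \<exists>a\<in>A. h a \<noteq> h' a"
    by (rule finite_separating_set[of "H ` words j"]) simp_all
  have "space cantor_measure \<subseteq> (\<Union>a\<in>A. (U a - V a) \<union> (V a - U a))"
  proof
    fix x :: "'k \<Rightarrow> bool"
    have "H (block c j False x) \<noteq> H (other_block c j x)"
      using inj_on_eq_iff[OF H(1) block_in_words[of c j False x] other_block_in_words[OF j, of c x]]
        other_block_neq_block[of c j x] by simp
    then obtain a where "a \<in> A" "H (block c j False x) a \<noteq> H (other_block c j x) a"
      using A[OF imageI[OF block_in_words] imageI[OF other_block_in_words[OF j]]] by blast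
    then show "x \<in> (\<Union>a\<in>A. (U a - V a) \<union> (V a - U a))"
      by (auto simp: U_def V_def)
  qed
  then show "forces_neq cantor_measure U V"
    using \<open>finite A\<close> U_sets V_sets by (intro cantor.forces_neqI)
  assume "p \<in> sets cantor_measure" "forces_in_diff cantor_measure p U V a"
  then have "measure cantor_measure p \<le> measure cantor_measure (U a - V a)"
    using U_sets V_sets by (intro cantor.measure_le_if_forces_in_diff)
  also have "\<dots> \<le> 1/4 + 1/2^j"
    using measure_block_not_other_block_le[OF c, of "\<lambda>v. H v a"] by (simp add: U_def V_def set_diff_eq)
  finally show "measure cantor_measure p \<le> 1/4 + 1/2^j" .
qed

theorem corollary7p11:
  fixes \<epsilon> :: real
  assumes "infinite (UNIV :: 'k set)"
    and "infinite (UNIV :: 'a::boolean_algebra set)"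
    and "\<epsilon> > 0"
  shows "\<exists>U V :: 'a \<Rightarrow> ('k \<Rightarrow> bool) set.
           ultrafilter_name cantor_measure U \<and> ultrafilter_name cantor_measure V \<and>
           forces_neq cantor_measure U V \<and>
           (\<forall>p\<in>sets cantor_measure. measure cantor_measure p > 0 \<longrightarrow>
              (\<exists>A. forces_in_diff cantor_measure p U V A) \<longrightarrow>
              measure cantor_measure p \<le> 1/4 + \<epsilon>)"
proof -
  obtain c0 :: "nat \<Rightarrow> 'k" where "inj c0"
    using infinite_countable_subset[OF assms(1)] by blast
  define c :: "nat \<times> bool \<Rightarrow> 'k" where "c = c0 \<circ> to_nat"
  have c: "inj c"
    using \<open>inj c0\<close> by (simp add: c_def inj_compose)
  obtain j :: nat where j: "0 < j" and j_eps: "1 / 2 ^ j \<le> \<epsilon>"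
  proof -
    obtain n where n: "(1/2::real) ^ n < \<epsilon>"
      using real_arch_pow_inv[OF assms(3), of "1/2"] by auto
    show thesis
      using power_decreasing[of n "Suc n" "1/2::real"] n by (intro that[of "Suc n"]) (simp_all add: power_one_over)
  qed
  obtain H :: "(nat \<Rightarrow> bool) \<Rightarrow> 'a \<Rightarrow> bool"
    where H: "inj_on H (words j)" "H ` words j \<subseteq> {h. boolean_hom h}"
    using inj_on_into_infinite[OF finite_words[of j] infinite_boolean_homs[OF assms(2)]] .
  note UV = block_ultrafilter_names[OF c j H]
  let ?U = "\<lambda>a. {x. H (block c j False x) a}" and ?V = "\<lambda>a. {x. H (other_block c j x) a}"
  have "measure cantor_measure p \<le> 1/4 + \<epsilon>"
    if "p \<in> sets cantor_measure" "forces_in_diff cantor_measure p ?U ?V a" for p a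
    using UV(4)[OF that] j_eps by linarith
  with UV(1-3) show ?thesis
    by blast
qed

end
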